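(* Let $(\Omega,\mathcal{F})$ be a measurable space, $\mathcal{P}$ a nonempty set of probability measures on it, $\hat{\mathbb{E}}[Z]=\sup_{P\in\mathcal{P}}E_P[Z]$, and let $X,Y$ be random variables with $\hat{\mathbb{E}}[X^2]+\hat{\mathbb{E}}[Y^2]<\infty$. Put $U=\frac{X+Y}{2}$ and $V=\frac{X-Y}{2}$. Then $$\overline{C}(X,Y)=\max_{\beta\in\mathbb{R}}\min_{\alpha\in\mathbb{R}}\hat{\mathbb{E}}[(U-\alpha)^2-(V-\beta)^2],\qquad \underline{C}(X,Y)=\min_{\alpha\in\mathbb{R}}\max_{\beta\in\mathbb{R}}\left(-\hat{\mathbb{E}}[-(U-\alpha)^2+(V-\beta)^2]\right).$$ In particular, $\overline{C}(X,X)=\overline{V}(X)$ and $\underline{C}(X,X)=\underline{V}(X)$.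
   Context: For a random variable $W$ with $\hat{\mathbb{E}}[W^2]<\infty$: $\overline{\mu}_W=\hat{\mathbb{E}}[W]$, $\underline{\mu}_W=-\hat{\mathbb{E}}[-W]$, $M_W=[\underline{\mu}_W,\overline{\mu}_W]$. Upper variance $\overline{V}(W)=\min_{\mu\in M_W}\hat{\mathbb{E}}[(W-\mu)^2]$, lower variance $\underline{V}(W)=\min_{\mu\in M_W}\left(-\hat{\mathbb{E}}[-(W-\mu)^2]\right)$. Upper covariance $\overline{C}(X,Y)=\max_{\mu_2\in M_Y}\min_{\mu_1\in M_X}\hat{\mathbb{E}}[(X-\mu_1)(Y-\mu_2)]$; lower covariance $\underline{C}(X,Y)=\min_{\mu_2\in M_Y}\max_{\mu_1\in M_X}\left(-\hat{\mathbb{E}}[-(X-\mu_1)(Y-\mu_2)]\right)$. *)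

theory Defs
  imports "HOL-Probability.Probability"
begin

definition Ehat :: "'a measure set \<Rightarrow> ('a \<Rightarrow> real) \<Rightarrow> real" where
  "Ehat Ps Z = (SUP P\<in>Ps. integral\<^sup>L P Z)"

definition mu_up :: "'a measure set \<Rightarrow> ('a \<Rightarrow> real) \<Rightarrow> real" where
  "mu_up Ps W = Ehat Ps W"

definition mu_low :: "'a measure set \<Rightarrow> ('a \<Rightarrow> real) \<Rightarrow> real" where
  "mu_low Ps W = - Ehat Ps (\<lambda>\<omega>. - W \<omega>)"

definition MW :: "'a measure set \<Rightarrow> ('a \<Rightarrow> real) \<Rightarrow> real set" where
  "MW Ps W = {mu_low Ps W .. mu_up Ps W}"

definition upper_var :: "'a measure set \<Rightarrow> ('a \<Rightarrow> real) \<Rightarrow> real" where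
  "upper_var Ps W = (INF \<mu>\<in>MW Ps W. Ehat Ps (\<lambda>\<omega>. (W \<omega> - \<mu>)^2))"

definition lower_var :: "'a measure set \<Rightarrow> ('a \<Rightarrow> real) \<Rightarrow> real" where
  "lower_var Ps W = (INF \<mu>\<in>MW Ps W. - Ehat Ps (\<lambda>\<omega>. - ((W \<omega> - \<mu>)^2)))"

definition upper_cov :: "'a measure set \<Rightarrow> ('a \<Rightarrow> real) \<Rightarrow> ('a \<Rightarrow> real) \<Rightarrow> real" where
  "upper_cov Ps X Y = (SUP \<mu>2\<in>MW Ps Y. INF \<mu>1\<in>MW Ps X.
      Ehat Ps (\<lambda>\<omega>. (X \<omega> - \<mu>1) * (Y \<omega> - \<mu>2)))"

definition lower_cov :: "'a measure set \<Rightarrow> ('a \<Rightarrow> real) \<Rightarrow> ('a \<Rightarrow> real) \<Rightarrow> real" where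
  "lower_cov Ps X Y = (INF \<mu>2\<in>MW Ps Y. SUP \<mu>1\<in>MW Ps X.
      - Ehat Ps (\<lambda>\<omega>. - ((X \<omega> - \<mu>1) * (Y \<omega> - \<mu>2))))"

end

theory Submission
  imports Defs
begin

(*
  For each P the expectation of (U - alpha)^2 - (V - beta)^2 is
  c_P + (alpha - E_P U)^2 - (beta - E_P V)^2 with c_P = Var_P U - Var_P V, and in the coordinates
  m1 = alpha + beta, m2 = alpha - beta it is E_P[(X - m1)(Y - m2)] = c_P + (m1 - E_P X)(m2 - E_P Y).
  So F is the supremum of a bounded family of quadratic saddle functions, and both max-min values
  (of F over the plane, and of the covariance form over M_Y x M_X) equal the supremum W of the
  covariances of the two-point mixtures l P + (1 - l) Q.  Each mixture covariance is a convex
  combination of two members of the family at a suitable beta (resp. m2), up to a square; conversely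
  the sublevel sets at level W of the members are intervals in alpha (resp. half-lines in m1) which
  meet pairwise because of the mixture bound, hence have a common point.  Minimisers and maximisers
  exist by uniform Lipschitz bounds and coercivity.  The variance identities are the cases Y = X and
  Y = -X, where clamping the centre into M_X does not increase the objective.
*)

lemma le_add_if_mixture_bound:
  fixes p q d :: real
  assumes p: "0 \<le> p" and q: "0 \<le> q"
    and mixture: "\<And>l. 0 \<le> l \<Longrightarrow> l \<le> 1 \<Longrightarrow> l * (1 - l) * d\<^sup>2 \<le> l * p\<^sup>2 + (1 - l) * q\<^sup>2"
  shows "d \<le> p + q"
proof (rule ccontr)
  assume "\<not> d \<le> p + q"
  define e where "e = (d - p - q) / 2"
  define A where "A = q + e"
  define B where "B = p + e"
  have e: "0 < e" using \<open>\<not> d \<le> p + q\<close> by (simp add: e_def)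
  have A: "0 < A" and B: "0 < B" using e p q by (auto simp: A_def B_def)
  have d: "d = A + B" by (simp add: A_def B_def e_def)
  have AB: "A + B \<noteq> 0" using A B by simp
  have "A / (A + B) * (1 - A / (A + B)) * (A + B)\<^sup>2 \<le> A / (A + B) * p\<^sup>2 + (1 - A / (A + B)) * q\<^sup>2"
    using mixture[of "A / (A + B)"] A B d by simp
  moreover have "1 - A / (A + B) = B / (A + B)" using AB by (simp add: field_simps)
  ultimately have "A * B \<le> (A * p\<^sup>2 + B * q\<^sup>2) / (A + B)"
    using AB by (simp add: power2_eq_square add_divide_distrib)
  then have "A * B * (A + B) \<le> A * p\<^sup>2 + B * q\<^sup>2"
    using A B by (simp add: pos_le_divide_eq)
  moreover have "p\<^sup>2 < B\<^sup>2" "q\<^sup>2 < A\<^sup>2"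
    using p q e by (simp_all add: A_def B_def power_strict_mono)
  then have "A * p\<^sup>2 < A * B\<^sup>2" "B * q\<^sup>2 < B * A\<^sup>2" using A B by simp_all
  ultimately have "A * B * (A + B) < A * B\<^sup>2 + B * A\<^sup>2" by linarith
  then show False by (simp add: power2_eq_square algebra_simps)
qed

lemma power2_diff_le:
  fixes a t K :: real
  assumes "\<bar>a\<bar> \<le> K"
  shows "(t - a)\<^sup>2 \<le> (\<bar>t\<bar> + K)\<^sup>2"
proof -
  have "\<bar>t - a\<bar> \<le> \<bar>\<bar>t\<bar> + K\<bar>" using assms abs_triangle_ineq4[of t a] by linarith
  then show ?thesis by (simp add: abs_le_square_iff)
qed

lemma power2_diff_ge:
  fixes a t K D :: real
  assumes "\<bar>a\<bar> \<le> K" and "0 \<le> D" and "K + 1 + D < \<bar>t\<bar>"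
  shows "D \<le> (t - a)\<^sup>2"
proof -
  have far: "1 + D \<le> \<bar>t - a\<bar>" using assms abs_triangle_ineq2[of t a] by linarith
  then have "\<bar>t - a\<bar> * 1 \<le> \<bar>t - a\<bar> * \<bar>t - a\<bar>"
    using \<open>0 \<le> D\<close> by (intro mult_left_mono) auto
  then show ?thesis using far by (simp add: power2_eq_square)
qed

lemma abs_power2_diff_le:
  fixes a s t K R :: real
  assumes "\<bar>a\<bar> \<le> K" and "\<bar>s\<bar> \<le> R" and "\<bar>t\<bar> \<le> R"
  shows "\<bar>(s - a)\<^sup>2 - (t - a)\<^sup>2\<bar> \<le> 2 * (R + K) * \<bar>s - t\<bar>"
proof -
  have "(s - a)\<^sup>2 - (t - a)\<^sup>2 = (s - t) * (s + t - 2 * a)"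
    by (simp add: power2_eq_square algebra_simps)
  moreover have "\<bar>s + t - 2 * a\<bar> \<le> 2 * (R + K)" using assms by (auto simp: abs_le_iff)
  ultimately show ?thesis by (simp add: abs_mult mult.commute mult_left_mono)
qed

lemma power2_clamp_le:
  fixes lo hi z t :: real
  assumes "lo \<le> z" and "z \<le> hi"
  shows "(max lo (min hi t) - z)\<^sup>2 \<le> (t - z)\<^sup>2"
proof -
  have "\<bar>max lo (min hi t) - z\<bar> \<le> \<bar>t - z\<bar>" using assms by linarith
  then show ?thesis by (simp add: abs_le_square_iff)
qed

lemma exists_between:
  fixes L U :: "real set"
  assumes "L \<noteq> {}" and "U \<noteq> {}" and le: "\<And>l u. l \<in> L \<Longrightarrow> u \<in> U \<Longrightarrow> l \<le> u"
  shows "\<exists>t. (\<forall>l\<in>L. l \<le> t) \<and> (\<forall>u\<in>U. t \<le> u)"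
proof -
  obtain u where "u \<in> U" using \<open>U \<noteq> {}\<close> by blast
  then have "bdd_above L" using le by (intro bdd_aboveI) blast
  then show ?thesis
    using assms by (intro exI[of _ "Sup L"]) (auto intro: cSup_upper cSup_least)
qed

lemma INF_uminus_real: "(INF i\<in>A. - g i) = - (SUP i\<in>A. g i)" for g :: "'i \<Rightarrow> real"
  by (simp add: Inf_real_def image_image)

lemma SUP_uminus_real: "(SUP i\<in>A. - g i) = - (INF i\<in>A. g i)" for g :: "'i \<Rightarrow> real"
  by (simp add: Inf_real_def image_image)

lemma lipschitz_on_cSUP:
  fixes f :: "'i \<Rightarrow> 'a::metric_space \<Rightarrow> real"
  assumes "I \<noteq> {}" and lip: "\<And>i. i \<in> I \<Longrightarrow> L-lipschitz_on S (f i)"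
    and bdd: "\<And>x. x \<in> S \<Longrightarrow> bdd_above ((\<lambda>i. f i x) ` I)"
  shows "L-lipschitz_on S (\<lambda>x. SUP i\<in>I. f i x)"
proof (rule lipschitz_onI)
  have le: "(SUP i\<in>I. f i x) \<le> (SUP i\<in>I. f i y) + L * dist x y" if "x \<in> S" "y \<in> S" for x y
  proof (rule cSUP_least[OF \<open>I \<noteq> {}\<close>])
    fix i assume "i \<in> I"
    have "f i x \<le> f i y + L * dist x y"
      using lipschitz_onD[OF lip[OF \<open>i \<in> I\<close>] that] by (simp add: dist_real_def)
    also have "f i y \<le> (SUP i\<in>I. f i y)" by (rule cSUP_upper[OF \<open>i \<in> I\<close> bdd[OF \<open>y \<in> S\<close>]])
    finally show "f i x \<le> (SUP i\<in>I. f i y) + L * dist x y" by simp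
  qed
  show "dist (SUP i\<in>I. f i x) (SUP i\<in>I. f i y) \<le> L * dist x y" if "x \<in> S" "y \<in> S" for x y
    using le[OF that] le[OF that(2,1)] by (simp add: dist_real_def dist_commute)
  show "0 \<le> L" using \<open>I \<noteq> {}\<close> lip lipschitz_on_nonneg by blast
qed

lemma lipschitz_on_cINF:
  fixes f :: "'i \<Rightarrow> 'a::metric_space \<Rightarrow> real"
  assumes "I \<noteq> {}" and lip: "\<And>i. i \<in> I \<Longrightarrow> L-lipschitz_on S (f i)"
    and bdd: "\<And>x. x \<in> S \<Longrightarrow> bdd_below ((\<lambda>i. f i x) ` I)"
  shows "L-lipschitz_on S (\<lambda>x. INF i\<in>I. f i x)"
proof -
  have "L-lipschitz_on S (\<lambda>x. SUP i\<in>I. - f i x)"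
  proof (rule lipschitz_on_cSUP[OF \<open>I \<noteq> {}\<close>])
    show "bdd_above ((\<lambda>i. - f i x) ` I)" if "x \<in> S" for x
      using bdd_above_uminus[of "(\<lambda>i. f i x) ` I"] bdd[OF that] by (simp add: image_image)
  qed (use lip in auto)
  then show ?thesis by (simp add: SUP_uminus_real)
qed

lemma continuous_attains_global_max:
  fixes g :: "real \<Rightarrow> real"
  assumes "0 \<le> R" and "continuous_on {-R..R} g" and outside: "\<And>t. R < \<bar>t\<bar> \<Longrightarrow> g t \<le> g 0"
  shows "\<exists>t0. \<forall>t. g t \<le> g t0"
proof -
  obtain t0 where t0: "t0 \<in> {-R..R}" "\<forall>t\<in>{-R..R}. g t \<le> g t0"
    using continuous_attains_sup[of "{-R..R}" g] assms by auto
  have "g t \<le> g t0" for t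
  proof (cases "\<bar>t\<bar> \<le> R")
    case True
    then show ?thesis using t0 by (auto simp: abs_le_iff)
  next
    case False
    then have "g t \<le> g 0" using outside by simp
    also have "g 0 \<le> g t0" using t0 \<open>0 \<le> R\<close> by auto
    finally show ?thesis .
  qed
  then show ?thesis by blast
qed

lemma continuous_attains_global_min:
  fixes g :: "real \<Rightarrow> real"
  assumes "0 \<le> R" and "continuous_on {-R..R} g" and outside: "\<And>t. R < \<bar>t\<bar> \<Longrightarrow> g 0 \<le> g t"
  shows "\<exists>t0. \<forall>t. g t0 \<le> g t"
  using continuous_attains_global_max[of R "\<lambda>t. - g t"] assms
  by (auto intro: continuous_on_minus)

lemma cSUP_cINF_eqI:
  fixes h :: "'a \<Rightarrow> 'b \<Rightarrow> real" and w :: "'p \<Rightarrow> real"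
  assumes "A \<noteq> {}" and "P \<noteq> {}" and "bdd_above (w ` P)"
    and bdd: "\<And>\<beta>. \<beta> \<in> B \<Longrightarrow> bdd_below ((\<lambda>\<alpha>. h \<alpha> \<beta>) ` A)"
    and upper: "\<And>\<beta>. \<beta> \<in> B \<Longrightarrow> \<exists>\<alpha>\<in>A. h \<alpha> \<beta> \<le> (SUP p\<in>P. w p)"
    and lower: "\<And>p. p \<in> P \<Longrightarrow> \<exists>\<beta>\<in>B. \<forall>\<alpha>\<in>A. w p \<le> h \<alpha> \<beta>"
  shows "(SUP \<beta>\<in>B. INF \<alpha>\<in>A. h \<alpha> \<beta>) = (SUP p\<in>P. w p)"
proof -
  have inner_le: "(INF \<alpha>\<in>A. h \<alpha> \<beta>) \<le> (SUP p\<in>P. w p)" if "\<beta> \<in> B" for \<beta>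
    using upper[OF that] bdd[OF that] by (auto intro: cINF_lower2)
  have "B \<noteq> {}" using \<open>P \<noteq> {}\<close> lower by blast
  have "bdd_above ((\<lambda>\<beta>. INF \<alpha>\<in>A. h \<alpha> \<beta>) ` B)" using inner_le by (rule bdd_aboveI2)
  show ?thesis
  proof (rule antisym)
    show "(SUP \<beta>\<in>B. INF \<alpha>\<in>A. h \<alpha> \<beta>) \<le> (SUP p\<in>P. w p)"
      using \<open>B \<noteq> {}\<close> inner_le by (rule cSUP_least)
    show "(SUP p\<in>P. w p) \<le> (SUP \<beta>\<in>B. INF \<alpha>\<in>A. h \<alpha> \<beta>)"
    proof (rule cSUP_least[OF \<open>P \<noteq> {}\<close>])
      fix p assume "p \<in> P"
      then obtain \<beta> where "\<beta> \<in> B" "\<forall>\<alpha>\<in>A. w p \<le> h \<alpha> \<beta>" using lower by blast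
      then have "w p \<le> (INF \<alpha>\<in>A. h \<alpha> \<beta>)" using \<open>A \<noteq> {}\<close> by (auto intro: cINF_greatest)
      also have "\<dots> \<le> (SUP \<beta>\<in>B. INF \<alpha>\<in>A. h \<alpha> \<beta>)"
        by (rule cSUP_upper[OF \<open>\<beta> \<in> B\<close>]) fact
      finally show "w p \<le> (SUP \<beta>\<in>B. INF \<alpha>\<in>A. h \<alpha> \<beta>)" .
    qed
  qed
qed

lemma cINF_UNIV_eq_cINF_if_dominated:
  fixes g :: "'a \<Rightarrow> real"
  assumes "bdd_below (range g)" and dominated: "\<And>t. \<exists>s\<in>A. g s \<le> g t"
  shows "(INF t. g t) = (INF s\<in>A. g s)"
proof (rule antisym)
  have "A \<noteq> {}" using dominated by blast
  then show "(INF t. g t) \<le> (INF s\<in>A. g s)"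
    using assms(1) by (rule cINF_superset_mono) auto
  show "(INF s\<in>A. g s) \<le> (INF t. g t)"
    using assms(1) dominated by (intro cINF_mono) (auto intro: bdd_below_mono)
qed

lemma cSUP_UNIV_eq_cSUP_if_dominated:
  fixes g :: "'a \<Rightarrow> real"
  assumes "bdd_above (range g)" and dominated: "\<And>t. \<exists>s\<in>A. g t \<le> g s"
  shows "(SUP t. g t) = (SUP s\<in>A. g s)"
proof (rule antisym)
  show "(SUP t. g t) \<le> (SUP s\<in>A. g s)"
    using assms(1) dominated by (intro cSUP_mono) (auto intro: bdd_above_mono)
  have "A \<noteq> {}" using dominated by blast
  then show "(SUP s\<in>A. g s) \<le> (SUP t. g t)"
    using assms(1) by (rule cSUP_subset_mono) auto
qed

lemma power2_add_le: "(u + v)\<^sup>2 \<le> 2 * u\<^sup>2 + 2 * v\<^sup>2" for u v :: real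
  using zero_le_power2[of "u - v"] by (simp add: power2_eq_square algebra_simps)

lemma abs_le_one_plus_power2: "\<bar>z\<bar> \<le> 1 + z\<^sup>2" for z :: real
  using zero_le_power2[of "\<bar>z\<bar> - 1"] by (simp add: power2_eq_square algebra_simps)

section \<open>Suprema of quadratic saddle functions\<close>

locale saddle_family =
  fixes I :: "'i set" and a b c :: "'i \<Rightarrow> real" and K :: real
  assumes nonempty: "I \<noteq> {}"
    and a_bound: "i \<in> I \<Longrightarrow> \<bar>a i\<bar> \<le> K"
    and b_bound: "i \<in> I \<Longrightarrow> \<bar>b i\<bar> \<le> K"
    and c_bound: "i \<in> I \<Longrightarrow> \<bar>c i\<bar> \<le> K"
begin

definition f :: "'i \<Rightarrow> real \<Rightarrow> real \<Rightarrow> real" where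
  "f i \<alpha> \<beta> = c i + (\<alpha> - a i)\<^sup>2 - (\<beta> - b i)\<^sup>2"

definition F :: "real \<Rightarrow> real \<Rightarrow> real" where
  "F \<alpha> \<beta> = (SUP i\<in>I. f i \<alpha> \<beta>)"

definition x :: "'i \<Rightarrow> real" where "x i = a i + b i"
definition y :: "'i \<Rightarrow> real" where "y i = a i - b i"

definition G :: "real \<Rightarrow> real \<Rightarrow> real" where
  "G m1 m2 = F ((m1 + m2) / 2) ((m1 - m2) / 2)"

lemma K_nonneg: "0 \<le> K"
  using nonempty a_bound by force

lemma f_bilinear: "f i ((m1 + m2) / 2) ((m1 - m2) / 2) = c i + (m1 - x i) * (m2 - y i)"
  by (simp add: f_def x_def y_def power2_eq_square field_simps)

lemma f_le: "i \<in> I \<Longrightarrow> f i \<alpha> \<beta> \<le> K + (\<bar>\<alpha>\<bar> + K)\<^sup>2"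
  using c_bound[of i] power2_diff_le[OF a_bound, of i \<alpha>] zero_le_power2[of "\<beta> - b i"]
  unfolding f_def by linarith

lemma f_ge: "i \<in> I \<Longrightarrow> - K - (\<bar>\<beta>\<bar> + K)\<^sup>2 \<le> f i \<alpha> \<beta>"
  using c_bound[of i] power2_diff_le[OF b_bound, of i \<beta>] zero_le_power2[of "\<alpha> - a i"]
  unfolding f_def by linarith

lemma bdd_above_f: "bdd_above ((\<lambda>i. f i \<alpha> \<beta>) ` I)"
  using f_le by (rule bdd_aboveI2)

lemma f_le_F: "i \<in> I \<Longrightarrow> f i \<alpha> \<beta> \<le> F \<alpha> \<beta>"
  unfolding F_def by (rule cSUP_upper[OF _ bdd_above_f])

lemma F_le: "(\<And>i. i \<in> I \<Longrightarrow> f i \<alpha> \<beta> \<le> C) \<Longrightarrow> F \<alpha> \<beta> \<le> C"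
  unfolding F_def by (rule cSUP_least[OF nonempty])

lemma F_ge: "- K - (\<bar>\<beta>\<bar> + K)\<^sup>2 \<le> F \<alpha> \<beta>"
  using nonempty f_ge f_le_F by (meson ex_in_conv order_trans)

lemma bdd_below_F: "bdd_below (range (\<lambda>\<alpha>. F \<alpha> \<beta>))"
  using F_ge by (intro bdd_belowI2)

lemma INF_F_le: "(INF \<alpha>. F \<alpha> \<beta>) \<le> F \<alpha> \<beta>"
  by (rule cINF_lower[OF bdd_below_F UNIV_I])

lemma F_0_le: "F 0 \<beta> \<le> K + K\<^sup>2"
proof (rule F_le)
  fix i assume "i \<in> I"
  have "(0 - a i)\<^sup>2 \<le> K\<^sup>2" using a_bound[OF \<open>i \<in> I\<close>] by (simp add: abs_le_square_iff[symmetric])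
  then show "f i 0 \<beta> \<le> K + K\<^sup>2"
    using c_bound[OF \<open>i \<in> I\<close>] zero_le_power2[of "\<beta> - b i"] unfolding f_def by linarith
qed

lemma g_le_G: "i \<in> I \<Longrightarrow> c i + (m1 - x i) * (m2 - y i) \<le> G m1 m2"
  unfolding G_def f_bilinear[symmetric] by (rule f_le_F)

lemma G_le: "(\<And>i. i \<in> I \<Longrightarrow> c i + (m1 - x i) * (m2 - y i) \<le> C) \<Longrightarrow> G m1 m2 \<le> C"
  unfolding G_def by (rule F_le) (simp add: f_bilinear)

(* The covariance under the mixture l P_i + (1 - l) P_j of measures with means x, y and covariance c. *)
definition mix :: "'i \<Rightarrow> 'i \<Rightarrow> real \<Rightarrow> real" where
  "mix i j l = l * c i + (1 - l) * c j + l * (1 - l) * (x i - x j) * (y i - y j)"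

definition W :: real where
  "W = (SUP (i, j, l) \<in> I \<times> I \<times> {0..1}. mix i j l)"

lemma mix_eq_convex_combination:
  assumes "m2 = l * y i + (1 - l) * y j"
  shows "l * (c i + (m1 - x i) * (m2 - y i)) + (1 - l) * (c j + (m1 - x j) * (m2 - y j)) = mix i j l"
  unfolding mix_def assms by (simp add: power2_eq_square algebra_simps)

lemma mix_le_F:
  assumes "i \<in> I" "j \<in> I" "0 \<le> l" "l \<le> 1"
  shows "mix i j l \<le> F \<alpha> (l * b i + (1 - l) * b j)"
proof -
  define \<beta> where "\<beta> = l * b i + (1 - l) * b j"
  have "l * f i \<alpha> \<beta> + (1 - l) * f j \<alpha> \<beta> = mix i j l + (\<alpha> - (l * a i + (1 - l) * a j))\<^sup>2"
    unfolding f_def mix_def x_def y_def \<beta>_def by (simp add: power2_eq_square algebra_simps)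
  moreover have "l * f i \<alpha> \<beta> + (1 - l) * f j \<alpha> \<beta> \<le> F \<alpha> \<beta>"
    using assms by (intro convex_bound_le f_le_F) auto
  ultimately show ?thesis
    unfolding \<beta>_def using zero_le_power2[of "\<alpha> - (l * a i + (1 - l) * a j)"] by linarith
qed

lemma mix_le_G:
  assumes "i \<in> I" "j \<in> I" "0 \<le> l" "l \<le> 1" and "m2 = l * y i + (1 - l) * y j"
  shows "mix i j l \<le> G m1 m2"
proof -
  have "l * (c i + (m1 - x i) * (m2 - y i)) + (1 - l) * (c j + (m1 - x j) * (m2 - y j)) \<le> G m1 m2"
    using assms(1-4) by (intro convex_bound_le g_le_G) auto
  then show ?thesis using mix_eq_convex_combination[OF assms(5)] by simp
qed

lemma bdd_above_mix: "bdd_above ((\<lambda>(i, j, l). mix i j l) ` (I \<times> I \<times> {0..1}))"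
proof (rule bdd_aboveI2)
  fix p assume "p \<in> I \<times> I \<times> {0..1::real}"
  then obtain i j l where "p = (i, j, l)" "i \<in> I" "j \<in> I" "0 \<le> l" "l \<le> 1" by auto
  then have "mix i j l \<le> K + K\<^sup>2" using mix_le_F[of i j l 0] F_0_le order_trans by blast
  then show "(case p of (i, j, l) \<Rightarrow> mix i j l) \<le> K + K\<^sup>2" using \<open>p = (i, j, l)\<close> by simp
qed

lemma mix_le_W: "i \<in> I \<Longrightarrow> j \<in> I \<Longrightarrow> 0 \<le> l \<Longrightarrow> l \<le> 1 \<Longrightarrow> mix i j l \<le> W"
  unfolding W_def using bdd_above_mix by (rule cSUP_upper2[where x = "(i, j, l)"]) auto

lemma c_le_W: "i \<in> I \<Longrightarrow> c i \<le> W"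
  using mix_le_W[of i i 1] by (simp add: mix_def)

lemma exists_F_le_W: "\<exists>\<alpha>. F \<alpha> \<beta> \<le> W"
proof -
  define \<rho> where "\<rho> i = W - c i + (\<beta> - b i)\<^sup>2" for i
  define p where "p i = sqrt (\<rho> i)" for i
  have \<rho>_nonneg: "0 \<le> \<rho> i" if "i \<in> I" for i
    using c_le_W[OF that] zero_le_power2[of "\<beta> - b i"] unfolding \<rho>_def by linarith
  then have p_nonneg: "0 \<le> p i" and p_square: "(p i)\<^sup>2 = \<rho> i" if "i \<in> I" for i
    using that unfolding p_def by simp_all
  have intervals_meet: "a i - p i \<le> a j + p j" if "i \<in> I" "j \<in> I" for i j
  proof -
    have "l * (1 - l) * \<bar>a i - a j\<bar>\<^sup>2 \<le> l * (p i)\<^sup>2 + (1 - l) * (p j)\<^sup>2"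
      if "0 \<le> l" "l \<le> 1" for l
    proof -
      have "l * \<rho> i + (1 - l) * \<rho> j - l * (1 - l) * (a i - a j)\<^sup>2
          = (W - mix i j l) + (\<beta> - (l * b i + (1 - l) * b j))\<^sup>2"
        unfolding \<rho>_def mix_def x_def y_def by (simp add: power2_eq_square algebra_simps)
      moreover have "mix i j l \<le> W" using mix_le_W \<open>i \<in> I\<close> \<open>j \<in> I\<close> that by blast
      ultimately have "l * (1 - l) * (a i - a j)\<^sup>2 \<le> l * \<rho> i + (1 - l) * \<rho> j"
        using zero_le_power2[of "\<beta> - (l * b i + (1 - l) * b j)"] by linarith
      then show ?thesis using p_square \<open>i \<in> I\<close> \<open>j \<in> I\<close> by simp
    qed
    then have "\<bar>a i - a j\<bar> \<le> p i + p j"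
      using le_add_if_mixture_bound p_nonneg that by blast
    then show ?thesis by linarith
  qed
  obtain t where lower: "\<forall>i\<in>I. a i - p i \<le> t" and upper: "\<forall>i\<in>I. t \<le> a i + p i"
    using exists_between[of "(\<lambda>i. a i - p i) ` I" "(\<lambda>i. a i + p i) ` I"] nonempty intervals_meet
    by auto
  have "F t \<beta> \<le> W"
  proof (rule F_le)
    fix i assume "i \<in> I"
    then have "\<bar>t - a i\<bar> \<le> \<bar>p i\<bar>" using lower upper p_nonneg by fastforce
    then have "(t - a i)\<^sup>2 \<le> \<rho> i" using p_square \<open>i \<in> I\<close> by (simp add: abs_le_square_iff)
    then show "f i t \<beta> \<le> W" unfolding f_def \<rho>_def by linarith
  qed
  then show ?thesis by blast
qed

definition xl :: real where "xl = (INF i\<in>I. x i)"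
definition xu :: real where "xu = (SUP i\<in>I. x i)"
definition yl :: real where "yl = (INF i\<in>I. y i)"
definition yu :: real where "yu = (SUP i\<in>I. y i)"

lemma x_bound: "i \<in> I \<Longrightarrow> \<bar>x i\<bar> \<le> 2 * K"
  using a_bound[of i] b_bound[of i] unfolding x_def by (auto simp: abs_le_iff)

lemma y_bound: "i \<in> I \<Longrightarrow> \<bar>y i\<bar> \<le> 2 * K"
  using a_bound[of i] b_bound[of i] unfolding y_def by (auto simp: abs_le_iff)

lemma x_between:
  assumes "i \<in> I" shows "xl \<le> x i \<and> x i \<le> xu"
proof -
  have "- (2 * K) \<le> x k" "x k \<le> 2 * K" if "k \<in> I" for k
    using x_bound[OF that] by auto
  then have "bdd_below (x ` I)" "bdd_above (x ` I)"
    by (auto intro: bdd_belowI2[where m = "- (2 * K)"] bdd_aboveI2[where M = "2 * K"])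
  then show ?thesis unfolding xl_def xu_def using assms by (auto intro: cINF_lower cSUP_upper)
qed

lemma y_between:
  assumes "i \<in> I" shows "yl \<le> y i \<and> y i \<le> yu"
proof -
  have "- (2 * K) \<le> y k" "y k \<le> 2 * K" if "k \<in> I" for k
    using y_bound[OF that] by auto
  then have "bdd_below (y ` I)" "bdd_above (y ` I)"
    by (auto intro: bdd_belowI2[where m = "- (2 * K)"] bdd_aboveI2[where M = "2 * K"])
  then show ?thesis unfolding yl_def yu_def using assms by (auto intro: cINF_lower cSUP_upper)
qed

lemma xl_le_xu: "xl \<le> xu"
  using nonempty x_between by (meson ex_in_conv order_trans)

definition crossing :: "real \<Rightarrow> 'i \<Rightarrow> real" where
  "crossing m2 i = x i + (W - c i) / (m2 - y i)"

lemma crossing_le_crossing: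
  assumes "i \<in> I" "y i < m2" and "j \<in> I" "m2 < y j"
  shows "crossing m2 j \<le> crossing m2 i"
proof -
  define g where "g k m1 = c k + (m1 - x k) * (m2 - y k)" for k m1
  define l where "l = (y j - m2) / (y j - y i)"
  have l: "0 < l" "l < 1" using assms(2,4) unfolding l_def by (auto simp: field_simps)
  have "l * (y j - y i) = y j - m2" using assms(2,4) unfolding l_def by simp
  then have "m2 = l * y i + (1 - l) * y j" by (simp add: algebra_simps)
  then have "l * g i (crossing m2 i) + (1 - l) * g j (crossing m2 i) = mix i j l"
    unfolding g_def by (rule mix_eq_convex_combination)
  moreover have "g i (crossing m2 i) = W"
    using assms(2) unfolding g_def crossing_def by simp
  ultimately have "l * W + (1 - l) * g j (crossing m2 i) = mix i j l" by simp
  moreover have "mix i j l \<le> W" using mix_le_W assms(1,3) l by simp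
  moreover have "(1 - l) * W = W - l * W" by (simp add: algebra_simps)
  ultimately have "(1 - l) * g j (crossing m2 i) \<le> (1 - l) * W" by linarith
  then have "(crossing m2 i - x j) * (m2 - y j) \<le> W - c j" using l unfolding g_def by simp
  then have "(W - c j) / (m2 - y j) \<le> crossing m2 i - x j" using assms(4) by (simp add: neg_divide_le_eq)
  then show ?thesis unfolding crossing_def[of m2 j] by simp
qed

lemma exists_G_le_W: "\<exists>m1\<in>{xl..xu}. G m1 m2 \<le> W"
proof -
  have xl_le_crossing: "xl \<le> crossing m2 i" if "i \<in> I" "y i < m2" for i
  proof -
    have "0 \<le> (W - c i) / (m2 - y i)" using c_le_W[OF that(1)] that(2) by simp
    then show ?thesis using x_between[OF that(1)] unfolding crossing_def by linarith
  qed
  have crossing_le_xu: "crossing m2 j \<le> xu" if "j \<in> I" "m2 < y j" for j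
  proof -
    have "(W - c j) / (m2 - y j) \<le> 0" using c_le_W[OF that(1)] that(2) by (simp add: divide_nonneg_neg)
    then show ?thesis using x_between[OF that(1)] unfolding crossing_def by linarith
  qed
  have "\<exists>t. (\<forall>l\<in>insert xl (crossing m2 ` {j\<in>I. m2 < y j}). l \<le> t)
      \<and> (\<forall>u\<in>insert xu (crossing m2 ` {i\<in>I. y i < m2}). t \<le> u)"
  proof (rule exists_between)
    show "l \<le> u" if "l \<in> insert xl (crossing m2 ` {j\<in>I. m2 < y j})"
      and "u \<in> insert xu (crossing m2 ` {i\<in>I. y i < m2})" for l u
      using that xl_le_xu xl_le_crossing crossing_le_xu crossing_le_crossing by auto
  qed auto
  then obtain t where lower: "\<forall>l\<in>insert xl (crossing m2 ` {j\<in>I. m2 < y j}). l \<le> t"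
    and upper: "\<forall>u\<in>insert xu (crossing m2 ` {i\<in>I. y i < m2}). t \<le> u"
    by blast
  have "G t m2 \<le> W"
  proof (rule G_le)
    fix i assume "i \<in> I"
    consider "y i = m2" | "y i < m2" | "m2 < y i" by linarith
    then show "c i + (t - x i) * (m2 - y i) \<le> W"
    proof cases
      case 1
      then show ?thesis using c_le_W[OF \<open>i \<in> I\<close>] by simp
    next
      case 2
      then have "(t - x i) * (m2 - y i) \<le> (crossing m2 i - x i) * (m2 - y i)"
        using upper \<open>i \<in> I\<close> by (intro mult_right_mono) auto
      then show ?thesis using 2 unfolding crossing_def by simp
    next
      case 3
      then have "(t - x i) * (m2 - y i) \<le> (crossing m2 i - x i) * (m2 - y i)"
        using lower \<open>i \<in> I\<close> by (intro mult_right_mono_neg) auto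
      then show ?thesis using 3 unfolding crossing_def by simp
    qed
  qed
  moreover have "t \<in> {xl..xu}" using lower upper by simp
  ultimately show ?thesis by blast
qed

lemma SUP_INF_F_eq_W: "(SUP \<beta>. INF \<alpha>. F \<alpha> \<beta>) = W"
  unfolding W_def
proof (rule cSUP_cINF_eqI)
  show "\<exists>\<beta>\<in>UNIV. \<forall>\<alpha>\<in>UNIV. (case p of (i, j, l) \<Rightarrow> mix i j l) \<le> F \<alpha> \<beta>"
    if p: "p \<in> I \<times> I \<times> {0..1}" for p
  proof -
    obtain i j l where "p = (i, j, l)" "i \<in> I" "j \<in> I" "0 \<le> l" "l \<le> 1"
      using p by auto
    then show ?thesis using mix_le_F by (intro bexI[of _ "l * b i + (1 - l) * b j"]) auto
  qed
qed (use nonempty bdd_above_mix bdd_below_F exists_F_le_W[unfolded W_def] in auto)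

lemma bdd_below_G: "bdd_below ((\<lambda>m1. G m1 m2) ` {xl..xu})"
proof -
  obtain i where "i \<in> I" using nonempty by blast
  have "c i - (xu - xl) * \<bar>m2 - y i\<bar> \<le> G m1 m2" if "m1 \<in> {xl..xu}" for m1
  proof -
    have "\<bar>m1 - x i\<bar> \<le> xu - xl" using that x_between[OF \<open>i \<in> I\<close>] by auto
    then have "\<bar>(m1 - x i) * (m2 - y i)\<bar> \<le> (xu - xl) * \<bar>m2 - y i\<bar>"
      unfolding abs_mult by (rule mult_right_mono) simp
    then show ?thesis using g_le_G[OF \<open>i \<in> I\<close>, of m1 m2] by linarith
  qed
  then show ?thesis by (rule bdd_belowI2)
qed

lemma SUP_INF_G_eq_W: "(SUP m2\<in>{yl..yu}. INF m1\<in>{xl..xu}. G m1 m2) = W"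
  unfolding W_def
proof (rule cSUP_cINF_eqI)
  show "\<exists>m2\<in>{yl..yu}. \<forall>m1\<in>{xl..xu}. (case p of (i, j, l) \<Rightarrow> mix i j l) \<le> G m1 m2"
    if p_mem: "p \<in> I \<times> I \<times> {0..1}" for p
  proof -
    obtain i j l where p: "p = (i, j, l)" "i \<in> I" "j \<in> I" "0 \<le> l" "l \<le> 1"
      using p_mem by auto
    have "l * yl + (1 - l) * yl \<le> l * y i + (1 - l) * y j"
      "l * y i + (1 - l) * y j \<le> l * yu + (1 - l) * yu"
      using y_between[OF p(2)] y_between[OF p(3)] p(4,5)
      by (auto intro!: add_mono mult_left_mono)
    then have "l * y i + (1 - l) * y j \<in> {yl..yu}" by (simp add: algebra_simps)
    then show ?thesis
      using mix_le_G[OF p(2-5) refl] p(1) by (intro bexI[of _ "l * y i + (1 - l) * y j"]) auto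
  qed
qed (use nonempty xl_le_xu bdd_above_mix bdd_below_G exists_G_le_W[unfolded W_def] in auto)

theorem SUP_INF_G_eq_SUP_INF_F:
  "(SUP m2\<in>{yl..yu}. INF m1\<in>{xl..xu}. G m1 m2) = (SUP \<beta>. INF \<alpha>. F \<alpha> \<beta>)"
  by (simp add: SUP_INF_G_eq_W SUP_INF_F_eq_W)

lemma lipschitz_on_F_fst: "0 \<le> R \<Longrightarrow> (2 * (R + K))-lipschitz_on {-R..R} (\<lambda>\<alpha>. F \<alpha> \<beta>)"
  unfolding F_def
proof (rule lipschitz_on_cSUP[OF nonempty])
  fix i assume "i \<in> I" and "0 \<le> R"
  show "(2 * (R + K))-lipschitz_on {-R..R} (\<lambda>\<alpha>. f i \<alpha> \<beta>)"
  proof (rule lipschitz_onI)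
    fix s t :: real assume "s \<in> {-R..R}" "t \<in> {-R..R}"
    then show "dist (f i s \<beta>) (f i t \<beta>) \<le> 2 * (R + K) * dist s t"
      using abs_power2_diff_le[OF a_bound[OF \<open>i \<in> I\<close>], of s R t]
      by (simp add: f_def dist_real_def abs_le_iff)
  qed (use \<open>0 \<le> R\<close> K_nonneg in simp)
qed (rule bdd_above_f)

lemma lipschitz_on_F_snd: "0 \<le> R \<Longrightarrow> (2 * (R + K))-lipschitz_on {-R..R} (\<lambda>\<beta>. F \<alpha> \<beta>)"
  unfolding F_def
proof (rule lipschitz_on_cSUP[OF nonempty])
  fix i assume "i \<in> I" and "0 \<le> R"
  show "(2 * (R + K))-lipschitz_on {-R..R} (\<lambda>\<beta>. f i \<alpha> \<beta>)"
  proof (rule lipschitz_onI)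
    fix s t :: real assume "s \<in> {-R..R}" "t \<in> {-R..R}"
    then show "dist (f i \<alpha> s) (f i \<alpha> t) \<le> 2 * (R + K) * dist s t"
      using abs_power2_diff_le[OF b_bound[OF \<open>i \<in> I\<close>], of s R t]
      by (simp add: f_def dist_real_def abs_le_iff abs_minus_commute)
  qed (use \<open>0 \<le> R\<close> K_nonneg in simp)
qed (rule bdd_above_f)

theorem F_attains_min: "\<exists>\<alpha>0. \<forall>\<alpha>. F \<alpha>0 \<beta> \<le> F \<alpha> \<beta>"
proof -
  define D where "D = 2 * K + K\<^sup>2 + (\<bar>\<beta>\<bar> + K)\<^sup>2"
  define R where "R = K + 1 + D"
  have "0 \<le> D" "0 \<le> R" using K_nonneg by (simp_all add: D_def R_def)
  show ?thesis
  proof (rule continuous_attains_global_min[OF \<open>0 \<le> R\<close>])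
    show "continuous_on {-R..R} (\<lambda>\<alpha>. F \<alpha> \<beta>)"
      using lipschitz_on_F_fst[OF \<open>0 \<le> R\<close>] by (rule lipschitz_on_continuous_on)
  next
    fix t :: real assume "R < \<bar>t\<bar>"
    obtain i where "i \<in> I" using nonempty by blast
    have "D \<le> (t - a i)\<^sup>2"
      using power2_diff_ge[OF a_bound[OF \<open>i \<in> I\<close>] \<open>0 \<le> D\<close>] \<open>R < \<bar>t\<bar>\<close> R_def by simp
    moreover have "(\<beta> - b i)\<^sup>2 \<le> (\<bar>\<beta>\<bar> + K)\<^sup>2" using power2_diff_le[OF b_bound[OF \<open>i \<in> I\<close>]] .
    ultimately have "K + K\<^sup>2 \<le> f i t \<beta>"
      using c_bound[OF \<open>i \<in> I\<close>] unfolding f_def D_def by linarith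
    then show "F 0 \<beta> \<le> F t \<beta>" using F_0_le f_le_F[OF \<open>i \<in> I\<close>] by (meson order_trans)
  qed
qed

theorem INF_F_attains_max: "\<exists>\<beta>0. \<forall>\<beta>. (INF \<alpha>. F \<alpha> \<beta>) \<le> (INF \<alpha>. F \<alpha> \<beta>0)"
proof -
  define D where "D = 2 * K + 2 * K\<^sup>2"
  define R where "R = K + 1 + D"
  have "0 \<le> D" "0 \<le> R" using K_nonneg by (simp_all add: D_def R_def)
  show ?thesis
  proof (rule continuous_attains_global_max[OF \<open>0 \<le> R\<close>])
    have "(2 * (R + K))-lipschitz_on {-R..R} (\<lambda>\<beta>. INF \<alpha>. F \<alpha> \<beta>)"
      using lipschitz_on_F_snd[OF \<open>0 \<le> R\<close>] bdd_below_F by (intro lipschitz_on_cINF) auto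
    then show "continuous_on {-R..R} (\<lambda>\<beta>. INF \<alpha>. F \<alpha> \<beta>)"
      by (rule lipschitz_on_continuous_on)
  next
    fix t :: real assume "R < \<bar>t\<bar>"
    have "F 0 t \<le> - K - K\<^sup>2"
    proof (rule F_le)
      fix i assume "i \<in> I"
      have "D \<le> (t - b i)\<^sup>2"
        using power2_diff_ge[OF b_bound[OF \<open>i \<in> I\<close>] \<open>0 \<le> D\<close>] \<open>R < \<bar>t\<bar>\<close> R_def by simp
      moreover have "(0 - a i)\<^sup>2 \<le> K\<^sup>2"
        using a_bound[OF \<open>i \<in> I\<close>] by (simp add: abs_le_square_iff[symmetric])
      ultimately show "f i 0 t \<le> - K - K\<^sup>2"
        using c_bound[OF \<open>i \<in> I\<close>] unfolding f_def D_def by linarith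
    qed
    moreover have "- K - K\<^sup>2 \<le> (INF \<alpha>. F \<alpha> 0)"
      using F_ge[of 0] by (intro cINF_greatest) auto
    ultimately show "(INF \<alpha>. F \<alpha> t) \<le> (INF \<alpha>. F \<alpha> 0)"
      using INF_F_le[of t 0] by linarith
  qed
qed

theorem SUP_INF_F_eq_INF_F_0:
  assumes b_zero: "\<And>i. i \<in> I \<Longrightarrow> b i = 0"
  shows "(SUP \<beta>. INF \<alpha>. F \<alpha> \<beta>) = (INF \<alpha>\<in>{xl..xu}. F \<alpha> 0)"
proof -
  have F_le_F_0: "F \<alpha> \<beta> \<le> F \<alpha> 0" for \<alpha> \<beta>
  proof (rule F_le)
    fix i assume "i \<in> I"
    then have "f i \<alpha> \<beta> \<le> f i \<alpha> 0" using b_zero by (simp add: f_def)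
    also have "\<dots> \<le> F \<alpha> 0" using \<open>i \<in> I\<close> by (rule f_le_F)
    finally show "f i \<alpha> \<beta> \<le> F \<alpha> 0" .
  qed
  then have "(INF \<alpha>. F \<alpha> \<beta>) \<le> (INF \<alpha>. F \<alpha> 0)" for \<beta>
    using order_trans[OF INF_F_le F_le_F_0] by (intro cINF_greatest) auto
  then have "(SUP \<beta>. INF \<alpha>. F \<alpha> \<beta>) = (INF \<alpha>. F \<alpha> 0)"
    by (intro cSup_eq_maximum) auto
  also have "\<dots> = (INF \<alpha>\<in>{xl..xu}. F \<alpha> 0)"
  proof (rule cINF_UNIV_eq_cINF_if_dominated[OF bdd_below_F])
    fix \<alpha> :: real
    have "F (max xl (min xu \<alpha>)) 0 \<le> F \<alpha> 0"
    proof (rule F_le)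
      fix i assume "i \<in> I"
      then have "(max xl (min xu \<alpha>) - a i)\<^sup>2 \<le> (\<alpha> - a i)\<^sup>2"
        using x_between b_zero by (intro power2_clamp_le) (auto simp: x_def)
      then show "f i (max xl (min xu \<alpha>)) 0 \<le> F \<alpha> 0"
        using f_le_F[OF \<open>i \<in> I\<close>, of \<alpha> 0] unfolding f_def by linarith
    qed
    then show "\<exists>s\<in>{xl..xu}. F s 0 \<le> F \<alpha> 0" using xl_le_xu by (intro bexI) auto
  qed
  finally show ?thesis .
qed

theorem SUP_INF_F_eq_SUP_F_0:
  assumes a_zero: "\<And>i. i \<in> I \<Longrightarrow> a i = 0"
  shows "(SUP \<beta>. INF \<alpha>. F \<alpha> \<beta>) = (SUP \<beta>\<in>{xl..xu}. F 0 \<beta>)"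
proof -
  have "F 0 \<beta> \<le> F \<alpha> \<beta>" for \<alpha> \<beta>
  proof (rule F_le)
    fix i assume "i \<in> I"
    then have "f i 0 \<beta> \<le> f i \<alpha> \<beta>" using a_zero by (simp add: f_def)
    also have "\<dots> \<le> F \<alpha> \<beta>" using \<open>i \<in> I\<close> by (rule f_le_F)
    finally show "f i 0 \<beta> \<le> F \<alpha> \<beta>" .
  qed
  then have "(INF \<alpha>. F \<alpha> \<beta>) = F 0 \<beta>" for \<beta>
    by (intro cInf_eq_minimum) auto
  then have "(SUP \<beta>. INF \<alpha>. F \<alpha> \<beta>) = (SUP \<beta>. F 0 \<beta>)" by simp
  also have "\<dots> = (SUP \<beta>\<in>{xl..xu}. F 0 \<beta>)"
  proof (rule cSUP_UNIV_eq_cSUP_if_dominated)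
    show "bdd_above (range (F 0))" using F_0_le by (intro bdd_aboveI2)
  next
    fix \<beta> :: real
    have "F 0 \<beta> \<le> F 0 (max xl (min xu \<beta>))"
    proof (rule F_le)
      fix i assume "i \<in> I"
      then have "(max xl (min xu \<beta>) - b i)\<^sup>2 \<le> (\<beta> - b i)\<^sup>2"
        using x_between a_zero by (intro power2_clamp_le) (auto simp: x_def)
      then show "f i 0 \<beta> \<le> F 0 (max xl (min xu \<beta>))"
        using f_le_F[OF \<open>i \<in> I\<close>, of 0 "max xl (min xu \<beta>)"] unfolding f_def by linarith
    qed
    then show "\<exists>s\<in>{xl..xu}. F 0 \<beta> \<le> F 0 s" using xl_le_xu by (intro bexI) auto
  qed
  finally show ?thesis .
qed

end

section \<open>Families of probability measures\<close>

lemma integrable_power2_lincomb: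
  fixes X Y :: "'a \<Rightarrow> real"
  assumes "X \<in> borel_measurable M" "Y \<in> borel_measurable M"
    and "integrable M (\<lambda>\<omega>. (X \<omega>)\<^sup>2)" "integrable M (\<lambda>\<omega>. (Y \<omega>)\<^sup>2)"
  shows "integrable M (\<lambda>\<omega>. (s * X \<omega> + t * Y \<omega>)\<^sup>2)"
proof (rule Bochner_Integration.integrable_bound[where f = "\<lambda>\<omega>. 2 * (s * X \<omega>)\<^sup>2 + 2 * (t * Y \<omega>)\<^sup>2"])
  show "integrable M (\<lambda>\<omega>. 2 * (s * X \<omega>)\<^sup>2 + 2 * (t * Y \<omega>)\<^sup>2)"
    using assms(3,4) by (simp add: power_mult_distrib)
  show "AE \<omega> in M. norm ((s * X \<omega> + t * Y \<omega>)\<^sup>2) \<le> norm (2 * (s * X \<omega>)\<^sup>2 + 2 * (t * Y \<omega>)\<^sup>2)"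
    using power2_add_le by simp
qed (use assms(1,2) in simp)

lemma (in finite_measure) integral_power2_diff:
  fixes Z :: "'a \<Rightarrow> real"
  assumes "integrable M Z" "integrable M (\<lambda>\<omega>. (Z \<omega>)\<^sup>2)"
  shows "integrable M (\<lambda>\<omega>. (Z \<omega> - \<alpha>)\<^sup>2)"
    and "integral\<^sup>L M (\<lambda>\<omega>. (Z \<omega> - \<alpha>)\<^sup>2)
      = integral\<^sup>L M (\<lambda>\<omega>. (Z \<omega>)\<^sup>2) - 2 * \<alpha> * integral\<^sup>L M Z + \<alpha>\<^sup>2 * measure M (space M)"
  using assms by (simp_all add: power2_diff algebra_simps)

lemma (in prob_space) power2_expectation_le:
  fixes Z :: "'a \<Rightarrow> real"
  assumes "integrable M Z" "integrable M (\<lambda>\<omega>. (Z \<omega>)\<^sup>2)"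
  shows "(expectation Z)\<^sup>2 \<le> expectation (\<lambda>\<omega>. (Z \<omega>)\<^sup>2)"
  using variance_eq[OF assms] variance_positive[of Z] by simp

lemma MW_uminus: "MW Ps (\<lambda>\<omega>. - Y \<omega>) = uminus ` MW Ps Y"
  by (simp add: MW_def mu_up_def mu_low_def)

lemma lower_cov_eq_neg_upper_cov: "lower_cov Ps X Y = - upper_cov Ps X (\<lambda>\<omega>. - Y \<omega>)"
proof -
  have "(\<lambda>\<omega>. (X \<omega> - \<mu>1) * (- Y \<omega> - - \<mu>2)) = (\<lambda>\<omega>. - ((X \<omega> - \<mu>1) * (Y \<omega> - \<mu>2)))" for \<mu>1 \<mu>2 :: real
    by (simp add: algebra_simps)
  then show ?thesis
    by (simp add: lower_cov_def upper_cov_def MW_uminus image_image INF_uminus_real SUP_uminus_real)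
qed

lemma MW_eq_expectations: "MW Ps Z = {(INF P\<in>Ps. integral\<^sup>L P Z) .. (SUP P\<in>Ps. integral\<^sup>L P Z)}"
  by (simp add: MW_def mu_up_def mu_low_def Ehat_def SUP_uminus_real)

locale prob_family =
  fixes M :: "'a measure" and Ps :: "'a measure set"
  assumes Ps_nonempty: "Ps \<noteq> {}"
    and prob_space_P: "P \<in> Ps \<Longrightarrow> prob_space P"
    and sets_P: "P \<in> Ps \<Longrightarrow> sets P = sets M"
begin

definition finite_second_moment :: "('a \<Rightarrow> real) \<Rightarrow> bool" where
  "finite_second_moment Z \<longleftrightarrow> Z \<in> borel_measurable M
    \<and> (\<forall>P\<in>Ps. integrable P (\<lambda>\<omega>. (Z \<omega>)\<^sup>2))
    \<and> bdd_above ((\<lambda>P. integral\<^sup>L P (\<lambda>\<omega>. (Z \<omega>)\<^sup>2)) ` Ps)"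

lemma measurable_P: "Z \<in> borel_measurable M \<Longrightarrow> P \<in> Ps \<Longrightarrow> Z \<in> borel_measurable P"
  by (simp add: measurable_cong_sets[OF sets_P refl])

lemma second_moment_le_Ehat:
  "finite_second_moment Z \<Longrightarrow> P \<in> Ps \<Longrightarrow> integral\<^sup>L P (\<lambda>\<omega>. (Z \<omega>)\<^sup>2) \<le> Ehat Ps (\<lambda>\<omega>. (Z \<omega>)\<^sup>2)"
  unfolding finite_second_moment_def Ehat_def by (auto intro: cSUP_upper)

lemma Ehat_second_moment_nonneg:
  "finite_second_moment Z \<Longrightarrow> 0 \<le> Ehat Ps (\<lambda>\<omega>. (Z \<omega>)\<^sup>2)"
  using Ps_nonempty second_moment_le_Ehat integral_nonneg_AE[of "\<lambda>\<omega>. (Z \<omega>)\<^sup>2"]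
  by (meson AE_I2 ex_in_conv order_trans zero_le_power2)

lemma integrable_of_finite_second_moment:
  "finite_second_moment Z \<Longrightarrow> P \<in> Ps \<Longrightarrow> integrable P Z"
  using finite_measure.square_integrable_imp_integrable prob_space_P measurable_P
  unfolding finite_second_moment_def prob_space_def by blast

lemma finite_second_moment_lincomb:
  assumes X: "finite_second_moment X" and Y: "finite_second_moment Y"
  shows "finite_second_moment (\<lambda>\<omega>. s * X \<omega> + t * Y \<omega>)"
proof -
  have int: "integrable P (\<lambda>\<omega>. (s * X \<omega> + t * Y \<omega>)\<^sup>2)" if "P \<in> Ps" for P
    using X Y that measurable_P unfolding finite_second_moment_def
    by (intro integrable_power2_lincomb) auto
  have pointwise: "(s * X \<omega> + t * Y \<omega>)\<^sup>2 \<le> 2 * s\<^sup>2 * (X \<omega>)\<^sup>2 + 2 * t\<^sup>2 * (Y \<omega>)\<^sup>2" for \<omega>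
    using power2_add_le[of "s * X \<omega>" "t * Y \<omega>"] by (simp add: power_mult_distrib)
  have bounded: "integral\<^sup>L P (\<lambda>\<omega>. (s * X \<omega> + t * Y \<omega>)\<^sup>2)
      \<le> 2 * s\<^sup>2 * Ehat Ps (\<lambda>\<omega>. (X \<omega>)\<^sup>2) + 2 * t\<^sup>2 * Ehat Ps (\<lambda>\<omega>. (Y \<omega>)\<^sup>2)" if "P \<in> Ps" for P
  proof -
    have "integral\<^sup>L P (\<lambda>\<omega>. (s * X \<omega> + t * Y \<omega>)\<^sup>2)
        \<le> integral\<^sup>L P (\<lambda>\<omega>. 2 * s\<^sup>2 * (X \<omega>)\<^sup>2 + 2 * t\<^sup>2 * (Y \<omega>)\<^sup>2)"
      using int[OF that] X Y that pointwise unfolding finite_second_moment_def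
      by (intro integral_mono) auto
    also have "\<dots> \<le> 2 * s\<^sup>2 * Ehat Ps (\<lambda>\<omega>. (X \<omega>)\<^sup>2) + 2 * t\<^sup>2 * Ehat Ps (\<lambda>\<omega>. (Y \<omega>)\<^sup>2)"
      using X Y that second_moment_le_Ehat unfolding finite_second_moment_def
      by (auto intro!: add_mono mult_left_mono)
    finally show ?thesis .
  qed
  have "bdd_above ((\<lambda>P. integral\<^sup>L P (\<lambda>\<omega>. (s * X \<omega> + t * Y \<omega>)\<^sup>2)) ` Ps)"
    using bounded by (rule bdd_aboveI2)
  then show ?thesis using X Y int unfolding finite_second_moment_def by auto
qed


lemma finite_second_moment_scaled:
  "finite_second_moment X \<Longrightarrow> finite_second_moment (\<lambda>\<omega>. s * X \<omega>)"
  using finite_second_moment_lincomb[of X X s 0] by simp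

end

locale moment_pair = prob_family +
  fixes U V :: "'a \<Rightarrow> real"
  assumes U: "finite_second_moment U" and V: "finite_second_moment V"
begin

definition variance_gap :: "'a measure \<Rightarrow> real" where
  "variance_gap P = (integral\<^sup>L P (\<lambda>\<omega>. (U \<omega>)\<^sup>2) - (integral\<^sup>L P U)\<^sup>2)
    - (integral\<^sup>L P (\<lambda>\<omega>. (V \<omega>)\<^sup>2) - (integral\<^sup>L P V)\<^sup>2)"

lemma integrable_moments:
  assumes "P \<in> Ps"
  shows "integrable P U" "integrable P (\<lambda>\<omega>. (U \<omega>)\<^sup>2)"
    and "integrable P V" "integrable P (\<lambda>\<omega>. (V \<omega>)\<^sup>2)"
  using integrable_of_finite_second_moment[OF U assms] integrable_of_finite_second_moment[OF V assms]
    U V assms unfolding finite_second_moment_def by blast+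

(* x P and y P are then the means of U + V and U - V, and variance_gap P is their covariance. *)
sublocale saddle_family Ps "\<lambda>P. integral\<^sup>L P U" "\<lambda>P. integral\<^sup>L P V" variance_gap
    "1 + Ehat Ps (\<lambda>\<omega>. (U \<omega>)\<^sup>2) + Ehat Ps (\<lambda>\<omega>. (V \<omega>)\<^sup>2)"
proof
  show "Ps \<noteq> {}" by (rule Ps_nonempty)
next
  fix P assume "P \<in> Ps"
  then interpret prob_space P by (rule prob_space_P)
  have U_mean: "(integral\<^sup>L P U)\<^sup>2 \<le> integral\<^sup>L P (\<lambda>\<omega>. (U \<omega>)\<^sup>2)"
    and V_mean: "(integral\<^sup>L P V)\<^sup>2 \<le> integral\<^sup>L P (\<lambda>\<omega>. (V \<omega>)\<^sup>2)"
    using integrable_moments[OF \<open>P \<in> Ps\<close>] by (simp_all add: power2_expectation_le)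
  have U_Ehat: "integral\<^sup>L P (\<lambda>\<omega>. (U \<omega>)\<^sup>2) \<le> Ehat Ps (\<lambda>\<omega>. (U \<omega>)\<^sup>2)"
    and V_Ehat: "integral\<^sup>L P (\<lambda>\<omega>. (V \<omega>)\<^sup>2) \<le> Ehat Ps (\<lambda>\<omega>. (V \<omega>)\<^sup>2)"
    using U V \<open>P \<in> Ps\<close> by (simp_all add: second_moment_le_Ehat)
  have "0 \<le> Ehat Ps (\<lambda>\<omega>. (U \<omega>)\<^sup>2)" "0 \<le> Ehat Ps (\<lambda>\<omega>. (V \<omega>)\<^sup>2)"
    using U V by (simp_all add: Ehat_second_moment_nonneg)
  then show "\<bar>integral\<^sup>L P U\<bar> \<le> 1 + Ehat Ps (\<lambda>\<omega>. (U \<omega>)\<^sup>2) + Ehat Ps (\<lambda>\<omega>. (V \<omega>)\<^sup>2)"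
    and "\<bar>integral\<^sup>L P V\<bar> \<le> 1 + Ehat Ps (\<lambda>\<omega>. (U \<omega>)\<^sup>2) + Ehat Ps (\<lambda>\<omega>. (V \<omega>)\<^sup>2)"
    and "\<bar>variance_gap P\<bar> \<le> 1 + Ehat Ps (\<lambda>\<omega>. (U \<omega>)\<^sup>2) + Ehat Ps (\<lambda>\<omega>. (V \<omega>)\<^sup>2)"
    using abs_le_one_plus_power2[of "integral\<^sup>L P U"] abs_le_one_plus_power2[of "integral\<^sup>L P V"]
      U_mean V_mean U_Ehat V_Ehat zero_le_power2[of "integral\<^sup>L P U"] zero_le_power2[of "integral\<^sup>L P V"]
    unfolding variance_gap_def abs_le_iff by linarith+
qed

lemma Ehat_eq_F: "Ehat Ps (\<lambda>\<omega>. (U \<omega> - \<alpha>)\<^sup>2 - (V \<omega> - \<beta>)\<^sup>2) = F \<alpha> \<beta>"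
  unfolding Ehat_def F_def
proof (rule SUP_cong[OF refl])
  fix P assume "P \<in> Ps"
  then interpret prob_space P by (rule prob_space_P)
  note moments = integrable_moments[OF \<open>P \<in> Ps\<close>]
  note U_shift = integral_power2_diff[OF moments(1,2), of \<alpha>]
    and V_shift = integral_power2_diff[OF moments(3,4), of \<beta>]
  have "integral\<^sup>L P (\<lambda>\<omega>. (U \<omega> - \<alpha>)\<^sup>2 - (V \<omega> - \<beta>)\<^sup>2)
      = integral\<^sup>L P (\<lambda>\<omega>. (U \<omega> - \<alpha>)\<^sup>2) - integral\<^sup>L P (\<lambda>\<omega>. (V \<omega> - \<beta>)\<^sup>2)"
    using U_shift(1) V_shift(1) by (rule Bochner_Integration.integral_diff)
  also have "\<dots> = f P \<alpha> \<beta>"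
    unfolding U_shift(2) V_shift(2) by (simp add: f_def variance_gap_def prob_space power2_eq_square algebra_simps)
  finally show "integral\<^sup>L P (\<lambda>\<omega>. (U \<omega> - \<alpha>)\<^sup>2 - (V \<omega> - \<beta>)\<^sup>2) = f P \<alpha> \<beta>" .
qed

lemma MW_add: "MW Ps (\<lambda>\<omega>. U \<omega> + V \<omega>) = {xl..xu}"
proof -
  have "integral\<^sup>L P (\<lambda>\<omega>. U \<omega> + V \<omega>) = x P" "integrable P (\<lambda>\<omega>. U \<omega> + V \<omega>)" if "P \<in> Ps" for P
    using integrable_moments[OF that] by (simp_all add: x_def)
  then show ?thesis by (simp add: MW_eq_expectations xl_def xu_def)
qed

lemma MW_diff: "MW Ps (\<lambda>\<omega>. U \<omega> - V \<omega>) = {yl..yu}"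
proof -
  have "integral\<^sup>L P (\<lambda>\<omega>. U \<omega> - V \<omega>) = y P" "integrable P (\<lambda>\<omega>. U \<omega> - V \<omega>)" if "P \<in> Ps" for P
    using integrable_moments[OF that] by (simp_all add: y_def)
  then show ?thesis by (simp add: MW_eq_expectations yl_def yu_def)
qed

lemma upper_cov_eq_SUP_INF_G:
  "upper_cov Ps (\<lambda>\<omega>. U \<omega> + V \<omega>) (\<lambda>\<omega>. U \<omega> - V \<omega>) = (SUP m2\<in>{yl..yu}. INF m1\<in>{xl..xu}. G m1 m2)"
proof -
  have "(\<lambda>\<omega>. (U \<omega> + V \<omega> - m1) * (U \<omega> - V \<omega> - m2))
      = (\<lambda>\<omega>. (U \<omega> - (m1 + m2) / 2)\<^sup>2 - (V \<omega> - (m1 - m2) / 2)\<^sup>2)" for m1 m2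
    by (rule ext) (simp add: power2_eq_square field_simps)
  then show ?thesis by (simp add: upper_cov_def MW_add MW_diff Ehat_eq_F G_def)
qed

end

context prob_family
begin

definition cov_saddle :: "('a \<Rightarrow> real) \<Rightarrow> ('a \<Rightarrow> real) \<Rightarrow> real \<Rightarrow> real \<Rightarrow> real" where
  "cov_saddle X Y \<alpha> \<beta> = Ehat Ps (\<lambda>\<omega>. ((X \<omega> + Y \<omega>) / 2 - \<alpha>)\<^sup>2 - ((X \<omega> - Y \<omega>) / 2 - \<beta>)\<^sup>2)"

lemma cov_saddle_minimax:
  assumes X: "finite_second_moment X" and Y: "finite_second_moment Y"
  shows cov_saddle_attains_min: "\<exists>\<alpha>0. \<forall>\<alpha>. cov_saddle X Y \<alpha>0 \<beta> \<le> cov_saddle X Y \<alpha> \<beta>"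
    and INF_cov_saddle_attains_max:
      "\<exists>\<beta>0. \<forall>\<beta>. (INF \<alpha>. cov_saddle X Y \<alpha> \<beta>) \<le> (INF \<alpha>. cov_saddle X Y \<alpha> \<beta>0)"
    and upper_cov_eq_SUP_INF_cov_saddle: "upper_cov Ps X Y = (SUP \<beta>. INF \<alpha>. cov_saddle X Y \<alpha> \<beta>)"
proof -
  interpret S: moment_pair M Ps "\<lambda>\<omega>. (X \<omega> + Y \<omega>) / 2" "\<lambda>\<omega>. (X \<omega> - Y \<omega>) / 2"
    using finite_second_moment_lincomb[OF X Y, of "1/2" "1/2"] finite_second_moment_lincomb[OF X Y, of "1/2" "-1/2"]
    by unfold_locales (simp_all add: add_divide_distrib diff_divide_distrib)
  have F: "cov_saddle X Y = S.F" by (intro ext) (simp add: cov_saddle_def S.Ehat_eq_F)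
  have "(\<lambda>\<omega>. (X \<omega> + Y \<omega>) / 2 + (X \<omega> - Y \<omega>) / 2) = X"
    and "(\<lambda>\<omega>. (X \<omega> + Y \<omega>) / 2 - (X \<omega> - Y \<omega>) / 2) = Y"
    by (simp_all add: field_simps)
  then show "upper_cov Ps X Y = (SUP \<beta>. INF \<alpha>. cov_saddle X Y \<alpha> \<beta>)"
    using S.upper_cov_eq_SUP_INF_G unfolding F S.SUP_INF_G_eq_SUP_INF_F by simp
  show "\<exists>\<alpha>0. \<forall>\<alpha>. cov_saddle X Y \<alpha>0 \<beta> \<le> cov_saddle X Y \<alpha> \<beta>"
    unfolding F by (rule S.F_attains_min)
  show "\<exists>\<beta>0. \<forall>\<beta>. (INF \<alpha>. cov_saddle X Y \<alpha> \<beta>) \<le> (INF \<alpha>. cov_saddle X Y \<alpha> \<beta>0)"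
    unfolding F by (rule S.INF_F_attains_max)
qed

lemma upper_cov_self_eq_upper_var:
  assumes X: "finite_second_moment X"
  shows "upper_cov Ps X X = upper_var Ps X"
proof -
  interpret S: moment_pair M Ps X "\<lambda>_. 0"
    using X finite_second_moment_scaled[OF X, of 0] by unfold_locales simp_all
  have "upper_cov Ps X X = upper_cov Ps (\<lambda>\<omega>. X \<omega> + 0) (\<lambda>\<omega>. X \<omega> - 0)" by simp
  also have "\<dots> = (SUP \<beta>. INF \<alpha>. S.F \<alpha> \<beta>)"
    unfolding S.upper_cov_eq_SUP_INF_G by (rule S.SUP_INF_G_eq_SUP_INF_F)
  also have "\<dots> = (INF \<mu>\<in>{S.xl..S.xu}. S.F \<mu> 0)"
    by (rule S.SUP_INF_F_eq_INF_F_0) simp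
  also have "\<dots> = upper_var Ps X"
    using S.MW_add S.Ehat_eq_F[of _ 0] by (simp add: upper_var_def)
  finally show ?thesis .
qed

lemma lower_cov_self_eq_lower_var:
  assumes X: "finite_second_moment X"
  shows "lower_cov Ps X X = lower_var Ps X"
proof -
  interpret S: moment_pair M Ps "\<lambda>_. 0" X
    using X finite_second_moment_scaled[OF X, of 0] by unfold_locales simp_all
  have "lower_cov Ps X X = - upper_cov Ps (\<lambda>\<omega>. 0 + X \<omega>) (\<lambda>\<omega>. 0 - X \<omega>)"
    by (simp add: lower_cov_eq_neg_upper_cov)
  also have "upper_cov Ps (\<lambda>\<omega>. 0 + X \<omega>) (\<lambda>\<omega>. 0 - X \<omega>) = (SUP \<beta>. INF \<alpha>. S.F \<alpha> \<beta>)"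
    unfolding S.upper_cov_eq_SUP_INF_G by (rule S.SUP_INF_G_eq_SUP_INF_F)
  also have "\<dots> = (SUP \<mu>\<in>{S.xl..S.xu}. S.F 0 \<mu>)"
    by (rule S.SUP_INF_F_eq_SUP_F_0) simp
  also have "- \<dots> = lower_var Ps X"
    using S.MW_add S.Ehat_eq_F[of 0] by (simp add: lower_var_def INF_uminus_real)
  finally show ?thesis .
qed

end

theorem proposition3p12:
  fixes M :: "'a measure" and Ps :: "'a measure set" and X Y :: "'a \<Rightarrow> real"
  assumes Ps_ne: "Ps \<noteq> {}"
    and Ps_prob: "\<And>P. P \<in> Ps \<Longrightarrow> prob_space P \<and> sets P = sets M"
    and X_meas: "X \<in> borel_measurable M" and Y_meas: "Y \<in> borel_measurable M"
    and X2_int: "\<And>P. P \<in> Ps \<Longrightarrow> integrable P (\<lambda>\<omega>. (X \<omega>)^2)"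
    and Y2_int: "\<And>P. P \<in> Ps \<Longrightarrow> integrable P (\<lambda>\<omega>. (Y \<omega>)^2)"
    and X2_bdd: "bdd_above ((\<lambda>P. integral\<^sup>L P (\<lambda>\<omega>. (X \<omega>)^2)) ` Ps)"
    and Y2_bdd: "bdd_above ((\<lambda>P. integral\<^sup>L P (\<lambda>\<omega>. (Y \<omega>)^2)) ` Ps)"
  shows
    "let U = (\<lambda>\<omega>. (X \<omega> + Y \<omega>) / 2); V = (\<lambda>\<omega>. (X \<omega> - Y \<omega>) / 2);
         F = (\<lambda>\<alpha> \<beta>. Ehat Ps (\<lambda>\<omega>. (U \<omega> - \<alpha>)^2 - (V \<omega> - \<beta>)^2));
         G = (\<lambda>\<alpha> \<beta>. - Ehat Ps (\<lambda>\<omega>. - ((U \<omega> - \<alpha>)^2) + (V \<omega> - \<beta>)^2))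
     in (\<forall>\<beta>. \<exists>\<alpha>0. \<forall>\<alpha>. F \<alpha>0 \<beta> \<le> F \<alpha> \<beta>)
      \<and> (\<exists>\<beta>0. \<forall>\<beta>. (INF \<alpha>. F \<alpha> \<beta>) \<le> (INF \<alpha>. F \<alpha> \<beta>0))
      \<and> upper_cov Ps X Y = (SUP \<beta>. INF \<alpha>. F \<alpha> \<beta>)
      \<and> (\<forall>\<alpha>. \<exists>\<beta>0. \<forall>\<beta>. G \<alpha> \<beta> \<le> G \<alpha> \<beta>0)
      \<and> (\<exists>\<alpha>0. \<forall>\<alpha>. (SUP \<beta>. G \<alpha>0 \<beta>) \<le> (SUP \<beta>. G \<alpha> \<beta>))
      \<and> lower_cov Ps X Y = (INF \<alpha>. SUP \<beta>. G \<alpha> \<beta>)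
      \<and> upper_cov Ps X X = upper_var Ps X
      \<and> lower_cov Ps X X = lower_var Ps X"
proof -
  interpret prob_family M Ps by (rule prob_family.intro) (simp_all add: Ps_ne Ps_prob)
  have X: "finite_second_moment X" and Y: "finite_second_moment Y"
    using X_meas Y_meas X2_int Y2_int X2_bdd Y2_bdd unfolding finite_second_moment_def by auto
  have negY: "finite_second_moment (\<lambda>\<omega>. - Y \<omega>)"
    using finite_second_moment_scaled[OF Y, of "-1"] by simp
  have F: "Ehat Ps (\<lambda>\<omega>. ((X \<omega> + Y \<omega>) / 2 - \<alpha>)\<^sup>2 - ((X \<omega> - Y \<omega>) / 2 - \<beta>)\<^sup>2) = cov_saddle X Y \<alpha> \<beta>"
    for \<alpha> \<beta> by (simp add: cov_saddle_def)
  have G: "Ehat Ps (\<lambda>\<omega>. - (((X \<omega> + Y \<omega>) / 2 - \<alpha>)\<^sup>2) + ((X \<omega> - Y \<omega>) / 2 - \<beta>)\<^sup>2)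
      = cov_saddle X (\<lambda>\<omega>. - Y \<omega>) \<beta> \<alpha>" for \<alpha> \<beta>
    by (simp add: cov_saddle_def algebra_simps)
  have lower: "lower_cov Ps X Y = (INF \<alpha>. - (INF \<beta>. cov_saddle X (\<lambda>\<omega>. - Y \<omega>) \<beta> \<alpha>))"
    by (simp add: lower_cov_eq_neg_upper_cov upper_cov_eq_SUP_INF_cov_saddle[OF X negY] INF_uminus_real)
  show ?thesis
    unfolding Let_def F G SUP_uminus_real neg_le_iff_le lower
    using cov_saddle_minimax[OF X Y] cov_saddle_minimax[OF X negY]
      upper_cov_self_eq_upper_var[OF X] lower_cov_self_eq_lower_var[OF X]
    by blast
qed

end
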